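(* Let $G=(V,E,s_0,s_1)$ be a switch graph and $o,d\in V$ with $o\neq d$, such that $\textsc{Run}(G,o,d)$ terminates. Let $\mathbf{x}(G,o,d):E\to\mathbb{N}_0$ (the run profile) assign to each edge the number of times it is traversed during $\textsc{Run}(G,o,d)$. Then $\mathbf{x}(G,o,d)$ is a switching flow.
   Context: A switch graph is a 4-tuple $G=(V,E,s_0,s_1)$ where $V$ is a finite vertex set, $s_0,s_1:V\to V$, and $E=\{(v,s_0(v)):v\in V\}\cup\{(v,s_1(v)):v\in V\}$ (loops allowed; possibly $s_0(v)=s_1(v)$). The procedure $\textsc{Run}(G,o,d)$: maintain arrays $\mathtt{s\_curr},\mathtt{s\_next}$ indexed by $V$, initially $\mathtt{s\_curr}[v]=s_0(v)$, $\mathtt{s\_next}[v]=s_1(v)$; set $v:=o$; while $v\neq d$: $w:=\mathtt{s\_curr}[v]$, swap $\mathtt{s\_curr}[v],\mathtt{s\_next}[v]$, $v:=w$ (traversing edge $(v,w)$). For $v\in V$, $E^+(v)$ and $E^-(v)$ denote the outgoing and incoming edges of $v$. A switching flow is a function $\mathbf{x}:E\to\mathbb{N}_0$, $e\mapsto x_e$, such that for all $v\in V$: (a) $\sum_{e\in E^+(v)}x_e-\sum_{e\in E^-(v)}x_e$ equals $1$ if $v=o$, $-1$ if $v=d$, and $0$ otherwise; and (b) $0\le x_{(v,s_1(v))}\le x_{(v,s_0(v))}\le x_{(v,s_1(v))}+1$. *)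

theory Defs
  imports Main
begin

text \<open>A switch graph (V, E, s0, s1): finite vertex set V, successor maps s0 s1 on V.
  The edge set E is determined by V, s0, s1.\<close>
definition switch_graph :: "'a set \<Rightarrow> ('a \<Rightarrow> 'a) \<Rightarrow> ('a \<Rightarrow> 'a) \<Rightarrow> bool" where
  "switch_graph V s0 s1 \<longleftrightarrow> finite V \<and> (\<forall>v\<in>V. s0 v \<in> V \<and> s1 v \<in> V)"

definition sw_edges :: "'a set \<Rightarrow> ('a \<Rightarrow> 'a) \<Rightarrow> ('a \<Rightarrow> 'a) \<Rightarrow> ('a \<times> 'a) set" where
  "sw_edges V s0 s1 = {(v, s0 v) | v. v \<in> V} \<union> {(v, s1 v) | v. v \<in> V}"

text \<open>One iteration of the loop body of Run: state is (current vertex, s_curr, s_next).\<close>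
fun run_step :: "'a \<times> ('a \<Rightarrow> 'a) \<times> ('a \<Rightarrow> 'a) \<Rightarrow> 'a \<times> ('a \<Rightarrow> 'a) \<times> ('a \<Rightarrow> 'a)" where
  "run_step (v, sc, sn) = (sc v, sc(v := sn v), sn(v := sc v))"

definition run_state :: "('a \<Rightarrow> 'a) \<Rightarrow> ('a \<Rightarrow> 'a) \<Rightarrow> 'a \<Rightarrow> nat \<Rightarrow> 'a \<times> ('a \<Rightarrow> 'a) \<times> ('a \<Rightarrow> 'a)" where
  "run_state s0 s1 org n = (run_step ^^ n) (org, s0, s1)"

text \<open>Vertex occupied after n iterations of the loop body (ignoring the stop test).\<close>
definition run_pos :: "('a \<Rightarrow> 'a) \<Rightarrow> ('a \<Rightarrow> 'a) \<Rightarrow> 'a \<Rightarrow> nat \<Rightarrow> 'a" where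
  "run_pos s0 s1 org n = fst (run_state s0 s1 org n)"

definition run_terminates :: "('a \<Rightarrow> 'a) \<Rightarrow> ('a \<Rightarrow> 'a) \<Rightarrow> 'a \<Rightarrow> 'a \<Rightarrow> bool" where
  "run_terminates s0 s1 org dst \<longleftrightarrow> (\<exists>n. run_pos s0 s1 org n = dst)"

definition run_length :: "('a \<Rightarrow> 'a) \<Rightarrow> ('a \<Rightarrow> 'a) \<Rightarrow> 'a \<Rightarrow> 'a \<Rightarrow> nat" where
  "run_length s0 s1 org dst = (LEAST n. run_pos s0 s1 org n = dst)"

definition run_profile :: "('a \<Rightarrow> 'a) \<Rightarrow> ('a \<Rightarrow> 'a) \<Rightarrow> 'a \<Rightarrow> 'a \<Rightarrow> 'a \<times> 'a \<Rightarrow> nat" where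
  "run_profile s0 s1 org dst e =
     card {i. i < run_length s0 s1 org dst \<and> (run_pos s0 s1 org i, run_pos s0 s1 org (Suc i)) = e}"

definition out_edges :: "('a \<times> 'a) set \<Rightarrow> 'a \<Rightarrow> ('a \<times> 'a) set" where
  "out_edges E v = {e \<in> E. fst e = v}"

definition in_edges :: "('a \<times> 'a) set \<Rightarrow> 'a \<Rightarrow> ('a \<times> 'a) set" where
  "in_edges E v = {e \<in> E. snd e = v}"

text \<open>Switching flow (values of x outside E are irrelevant).\<close>
definition switching_flow :: "'a set \<Rightarrow> ('a \<Rightarrow> 'a) \<Rightarrow> ('a \<Rightarrow> 'a) \<Rightarrow> 'a \<Rightarrow> 'a \<Rightarrow> ('a \<times> 'a \<Rightarrow> nat) \<Rightarrow> bool" where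
  "switching_flow V s0 s1 org dst x \<longleftrightarrow>
     (\<forall>v\<in>V.
        int (\<Sum>e\<in>out_edges (sw_edges V s0 s1) v. x e) - int (\<Sum>e\<in>in_edges (sw_edges V s0 s1) v. x e)
          = (if v = org then 1 else if v = dst then -1 else 0)
      \<and> x (v, s1 v) \<le> x (v, s0 v) \<and> x (v, s0 v) \<le> x (v, s1 v) + 1)"

end

theory Submission
  imports Defs
begin

text \<open>Conservation holds for the step counts of any walk: the visits to v are the departures
  from v, which equal the arrivals at v up to the start and end of the walk. The balance
  condition comes from the invariant that, after n steps, the current successor of v is
  s0 v or s1 v according to the parity of the number of departures from v so far; hence those
  departures alternate between (v, s0 v) and (v, s1 v), starting with (v, s0 v).\<close>

definition visit_count :: "(nat \<Rightarrow> 'a) \<Rightarrow> nat \<Rightarrow> 'a \<Rightarrow> nat" where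
  "visit_count p n v = card {i. i < n \<and> p i = v}"

definition step_count :: "(nat \<Rightarrow> 'a) \<Rightarrow> nat \<Rightarrow> 'a \<times> 'a \<Rightarrow> nat" where
  "step_count p n e = card {i. i < n \<and> (p i, p (Suc i)) = e}"

lemma card_less_Suc_conj:
  "card {i. i < Suc n \<and> P i} = card {i. i < n \<and> P i} + (if P n then 1 else 0)"
proof -
  have "{i. i < Suc n \<and> P i} = {i. i < n \<and> P i} \<union> (if P n then {n} else {})"
    by (auto simp: less_Suc_eq)
  then show ?thesis by auto
qed

lemma visit_count_Suc:
  "visit_count p (Suc n) v = visit_count p n v + (if p n = v then 1 else 0)"
  unfolding visit_count_def by (rule card_less_Suc_conj)

lemma step_count_Suc:
  "step_count p (Suc n) e = step_count p n e + (if (p n, p (Suc n)) = e then 1 else 0)"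
  unfolding step_count_def by (rule card_less_Suc_conj)

lemma sum_step_count:
  assumes "finite A"
  shows "(\<Sum>e\<in>A. step_count p n e) = card {i. i < n \<and> (p i, p (Suc i)) \<in> A}"
proof (induction n)
  case 0
  then show ?case by (simp add: step_count_def)
next
  case (Suc n)
  have "(\<Sum>e\<in>A. step_count p (Suc n) e)
      = (\<Sum>e\<in>A. step_count p n e) + (\<Sum>e\<in>A. if (p n, p (Suc n)) = e then 1 else 0)"
    by (simp add: step_count_Suc sum.distrib)
  also have "(\<Sum>e\<in>A. if (p n, p (Suc n)) = e then 1 else 0)
      = (if (p n, p (Suc n)) \<in> A then 1 else (0::nat))"
    using assms by (simp add: sum.delta)
  finally show ?case
    using Suc.IH card_less_Suc_conj[of n "\<lambda>i. (p i, p (Suc i)) \<in> A"] by simp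
qed

lemma arrivals_add_start_eq_visits_add_end:
  "card {i. i < n \<and> p (Suc i) = v} + (if p 0 = v then 1 else 0)
   = visit_count p n v + (if p n = v then 1 else 0)"
proof (induction n)
  case 0
  then show ?case by (simp add: visit_count_def)
next
  case (Suc n)
  then show ?case
    by (simp add: visit_count_Suc card_less_Suc_conj[of n "\<lambda>i. p (Suc i) = v"])
qed

lemma walk_flow_conservation:
  assumes "finite E" and steps: "\<And>i. (p i, p (Suc i)) \<in> E"
  shows "int (\<Sum>e\<in>out_edges E v. step_count p n e) - int (\<Sum>e\<in>in_edges E v. step_count p n e)
       = (if p 0 = v then 1 else 0) - (if p n = v then 1 else 0)"
proof -
  have fin: "finite (out_edges E v)" "finite (in_edges E v)"
    using assms(1) by (auto simp: out_edges_def in_edges_def)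
  have "(\<Sum>e\<in>out_edges E v. step_count p n e) = visit_count p n v"
    using sum_step_count[OF fin(1)] steps by (simp add: out_edges_def visit_count_def)
  moreover have "(\<Sum>e\<in>in_edges E v. step_count p n e) = card {i. i < n \<and> p (Suc i) = v}"
    using sum_step_count[OF fin(2)] steps by (simp add: in_edges_def)
  ultimately show ?thesis
    using arrivals_add_start_eq_visits_add_end[of n p v] by (simp split: if_splits)
qed

lemma run_state_Suc:
  "run_state s0 s1 org (Suc n) = run_step (run_state s0 s1 org n)"
  by (simp add: run_state_def)

lemma run_state_switches:
  fixes s0 s1 :: "'a \<Rightarrow> 'a" and org v :: 'a and n :: nat
  defines "k \<equiv> visit_count (run_pos s0 s1 org) n v"
  shows "fst (snd (run_state s0 s1 org n)) v = (if even k then s0 v else s1 v)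
    \<and> snd (snd (run_state s0 s1 org n)) v = (if even k then s1 v else s0 v)"
  unfolding k_def
proof (induction n)
  case 0
  then show ?case by (simp add: run_state_def visit_count_def)
next
  case (Suc n)
  obtain w sc sn where st: "run_state s0 s1 org n = (w, sc, sn)"
    by (metis prod.exhaust)
  then have "run_pos s0 s1 org n = w"
    by (simp add: run_pos_def)
  then show ?case
    using Suc st by (auto simp: run_state_Suc visit_count_Suc)
qed

lemma run_pos_Suc:
  "run_pos s0 s1 org (Suc n) =
     (let v = run_pos s0 s1 org n
      in if even (visit_count (run_pos s0 s1 org) n v) then s0 v else s1 v)"
proof -
  obtain w sc sn where st: "run_state s0 s1 org n = (w, sc, sn)"
    by (metis prod.exhaust)
  then show ?thesis
    using run_state_switches[of s0 s1 org n w] by (simp add: run_pos_def run_state_Suc)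
qed

lemma run_pos_in_vertices:
  assumes "switch_graph V s0 s1" and "org \<in> V"
  shows "run_pos s0 s1 org n \<in> V"
proof (induction n)
  case 0
  then show ?case using assms(2) by (simp add: run_pos_def run_state_def)
next
  case (Suc n)
  then show ?case using assms(1) by (simp add: run_pos_Suc Let_def switch_graph_def)
qed

lemma run_step_in_sw_edges:
  assumes "switch_graph V s0 s1" and "org \<in> V"
  shows "(run_pos s0 s1 org n, run_pos s0 s1 org (Suc n)) \<in> sw_edges V s0 s1"
  using run_pos_in_vertices[OF assms, of n] by (auto simp: run_pos_Suc Let_def sw_edges_def)

lemma run_step_count_alternates:
  fixes s0 s1 :: "'a \<Rightarrow> 'a" and org v :: 'a and n :: nat
  assumes "s0 v \<noteq> s1 v"
  defines "p \<equiv> run_pos s0 s1 org"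
  shows "step_count p n (v, s0 v) = (visit_count p n v + 1) div 2
    \<and> step_count p n (v, s1 v) = visit_count p n v div 2"
  unfolding p_def
proof (induction n)
  case 0
  then show ?case by (simp add: step_count_def visit_count_def)
next
  case (Suc n)
  then show ?case
    using assms(1) by (auto simp: step_count_Suc visit_count_Suc run_pos_Suc Let_def)
qed

lemma run_step_count_balanced:
  fixes s0 s1 :: "'a \<Rightarrow> 'a" and org v :: 'a and n :: nat
  defines "x \<equiv> step_count (run_pos s0 s1 org) n"
  shows "x (v, s1 v) \<le> x (v, s0 v) \<and> x (v, s0 v) \<le> x (v, s1 v) + 1"
  unfolding x_def using run_step_count_alternates[of s0 v s1 org n] by (cases "s0 v = s1 v") auto

theorem mainTheorem2:
  fixes V :: "'a set" and s0 s1 :: "'a \<Rightarrow> 'a" and org dst :: 'a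
  assumes "switch_graph V s0 s1"
    and "org \<in> V" and "dst \<in> V" and "org \<noteq> dst"
    and "run_terminates s0 s1 org dst"
  shows "switching_flow V s0 s1 org dst (run_profile s0 s1 org dst)"
proof -
  define p where "p = run_pos s0 s1 org"
  define L where "L = run_length s0 s1 org dst"
  have end_dst: "p L = dst"
    using assms(5) unfolding p_def L_def run_length_def run_terminates_def by (rule LeastI_ex)
  have start_org: "p 0 = org"
    by (simp add: p_def run_pos_def run_state_def)
  have profile: "run_profile s0 s1 org dst = step_count p L"
    by (rule ext) (simp add: run_profile_def step_count_def p_def L_def)
  have "finite (sw_edges V s0 s1)"
    using assms(1) by (auto simp: sw_edges_def switch_graph_def)
  then have "int (\<Sum>e\<in>out_edges (sw_edges V s0 s1) v. step_count p L e)
      - int (\<Sum>e\<in>in_edges (sw_edges V s0 s1) v. step_count p L e)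
      = (if v = org then 1 else if v = dst then -1 else 0)" for v
    using walk_flow_conservation[of "sw_edges V s0 s1" p] run_step_in_sw_edges[OF assms(1,2)]
      end_dst start_org assms(4) unfolding p_def by auto
  then show ?thesis
    unfolding switching_flow_def profile p_def using run_step_count_balanced[of s0 s1 org L] by blast
qed

end
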